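(* Let $E_3^*$ be the greedy exponential-progression-free set defined in the context. Then the exponential density of $\mathbb{N}\setminus E_3^*$ exists and equals $1/4$, i.e. $$\lim_{n\to\infty}\frac{\log\big(\#\{a\in \mathbb{N}\setminus E_3^* : a\le n\}\big)}{\log n} = \frac14.$$
   Context: An exponential progression is a triple $x, x^n, x^{n^2}$ with natural numbers $x, n > 1$. $E_3^*$ is constructed greedily: $1\in E_3^*$, and for $k=2,3,\dots$ in increasing order, $k$ is put into $E_3^*$ unless there are natural numbers $x,n>1$ with $x, x^n\in E_3^*$ and $k=x^{n^2}$. The upper exponential density of $A\subseteq\mathbb{N}$ is $\overline{e}(A)=\limsup_{n\to\infty}\frac{1}{\log n}\log\big(\#\{a\in A: a\le n\}\big)$; the lower exponential density uses $\liminf$, and the exponential density $e(A)$ is the common value when they agree. *)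

theory Defs
  imports "HOL-Analysis.Analysis"
begin

text \<open>Greedy exponential-progression-free set E_3^* (over positive naturals).
  inE k decides k \<in> E_3^*: 1 is in; k \<ge> 2 is in unless k = x^(n^2) for some
  x, n > 1 with x and x^n already in the set. The bounds x < k and n < k are
  implied by k = x^(n^2) with x, n > 1, and ensure termination.\<close>

function inE :: "nat \<Rightarrow> bool" where
  "inE k = (if k = 0 then False
            else if k = 1 then True
            else \<not> (\<exists>x n. x < k \<and> n < k \<and> x > 1 \<and> n > 1 \<and> k = x ^ (n^2)
                        \<and> (if x < k then inE x else False)
                        \<and> (if x ^ n < k then inE (x ^ n) else False)))"
  by auto
termination
  by (relation "Wellfounded.measure id") auto

definition E3star :: "nat set" where
  "E3star = {k. inE k}"

end

theory Submission
  imports Defs "HOL-Real_Asymp.Real_Asymp"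
begin

text \<open>Every element missing from \<open>E\<^sub>3\<^sup>*\<close> is a power \<open>x^j\<close> with \<open>x \<ge> 2\<close> and \<open>j \<ge> 4\<close>; there
  are at most \<open>N^(1/4)\<close> choices of \<open>x\<close> and \<open>log\<^sub>2 N\<close> of \<open>j\<close> below \<open>N\<close>, giving the upper bound
  \<open>N^(1/4 + o(1))\<close>. Conversely, for odd \<open>m\<close> neither \<open>2m\<close> nor \<open>(2m)\<^sup>2\<close> is of the form \<open>x^(n\<^sup>2)\<close>
  (such powers, when even, are divisible by 16), so both lie in \<open>E\<^sub>3\<^sup>*\<close> and \<open>(2m)\<^sup>4\<close> is
  excluded; this already gives \<open>\<ge> N^(1/4)/4 - 1\<close> missing elements up to \<open>N\<close>.\<close>

declare inE.simps[simp del]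

lemma not_inE_imp_pow_square:
  assumes "\<not> inE k" "k \<ge> 1"
  shows "\<exists>x n. x > 1 \<and> n > 1 \<and> k = x ^ (n^2)"
  using assms by (subst (asm) inE.simps) (auto split: if_splits)

lemma inE_if_not_pow_square:
  assumes "k \<ge> 2" "\<not> (\<exists>x n. x > 1 \<and> n > 1 \<and> k = x ^ (n^2))"
  shows "inE k"
  using assms by (subst inE.simps) auto

lemma not_inE_pow_square:
  assumes "x > (1::nat)" "n > 1" "inE x" "inE (x^n)"
  shows "\<not> inE (x ^ (n^2))"
proof -
  have "x^n < x^(n^2)"
    using assms(1,2) by (simp add: power_strict_increasing power2_eq_square)
  moreover have "x < x^n"
    using assms(1,2) by (metis power_one_right power_strict_increasing)
  moreover have "n < x^n"
    using less_exp[of n] power_mono[of 2 x n] assms(1) by linarith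
  ultimately have "x < x^(n^2)" "n < x^(n^2)" "x^n < x^(n^2)" "x^(n^2) \<noteq> 0" "x^(n^2) \<noteq> 1"
    by linarith+
  with assms show ?thesis by (subst inE.simps) auto
qed

lemma four_le_square: "(n::nat) > 1 \<Longrightarrow> 4 \<le> n^2"
  using mult_le_mono[of 2 n 2 n] by (simp add: power2_eq_square)

lemma sixteen_dvd_even_pow_square:
  assumes "(n::nat) > 1" "even (y^(n^2))"
  shows "(16::nat) dvd y^(n^2)"
proof -
  have "even y" using assms by simp
  then have "2^(n^2) dvd y^(n^2)" by (simp add: dvd_power_same)
  moreover have "(2::nat)^4 dvd 2^(n^2)"
    using four_le_square[OF assms(1)] by (rule le_imp_power_dvd)
  ultimately show ?thesis by (simp add: dvd_trans)
qed

lemma inE_double_odd: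
  assumes "odd m" shows "inE (2*m)"
proof (rule inE_if_not_pow_square)
  show "2 \<le> 2*m" using assms by (cases m) auto
  show "\<not> (\<exists>x n. x > 1 \<and> n > 1 \<and> 2*m = x ^ (n^2))"
  proof
    assume "\<exists>x n. x > 1 \<and> n > 1 \<and> 2*m = x ^ (n^2)"
    then obtain x n where n: "n > 1" and eq: "x^(n^2) = 2*m" by auto
    have "16 dvd 2*m" using sixteen_dvd_even_pow_square[OF n, of x] by (simp add: eq)
    then show False using assms by presburger
  qed
qed

lemma inE_double_odd_square:
  assumes "odd m" shows "inE ((2*m)^2)"
proof (rule inE_if_not_pow_square)
  show "2 \<le> (2*m)^2" using assms by (cases m) (auto simp: power2_eq_square)
  show "\<not> (\<exists>x n. x > 1 \<and> n > 1 \<and> (2*m)^2 = x ^ (n^2))"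
  proof
    assume "\<exists>x n. x > 1 \<and> n > 1 \<and> (2*m)^2 = x ^ (n^2)"
    then obtain x n where n: "n > 1" and eq: "x^(n^2) = (2*m)^2" by auto
    have "16 dvd (2*m)^2" using sixteen_dvd_even_pow_square[OF n, of x] by (simp add: eq)
    then have "4 dvd m*m" by (simp add: power2_eq_square)
    then have "even (m*m)" by (meson dvd_trans even_numeral)
    then show False using assms by simp
  qed
qed

lemma not_inE_double_odd_fourth:
  assumes "odd m" shows "\<not> inE ((2*m)^4)"
  using not_inE_pow_square[of "2*m" 2] inE_double_odd[OF assms] inE_double_odd_square[OF assms]
    assms by (cases m) auto

lemma real_le_root_if_power_le:
  fixes x N k :: nat
  assumes "k \<ge> 1" "real x ^ k \<le> real N"
  shows "real x \<le> real N powr (1/k)"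
proof (cases "x = 0")
  case False
  have "real x = (real x ^ k) powr (1/k)"
    using assms(1) False by (simp add: powr_powr flip: powr_realpow)
  also have "\<dots> \<le> real N powr (1/k)"
    using assms(2) by (intro powr_mono2) auto
  finally show ?thesis .
qed simp

lemma exponent_le_log2_if_power_le:
  fixes x j N :: nat
  assumes "2 \<le> x" "x^j \<le> N"
  shows "real j \<le> log 2 (real N)"
proof -
  have "2^j \<le> N" using power_mono[OF assms(1), of j] assms(2) by linarith
  moreover have "0 < N" using calculation less_le_trans[of 0 "2^j" N] by simp
  ultimately have "log 2 (real (2^j)) \<le> log 2 (real N)" by (subst log_le_cancel_iff) auto
  then show ?thesis by (simp add: log_nat_power)
qed

lemma card_powers_le:
  fixes N k :: nat
  assumes "k \<ge> 1"
  shows "real (card {x^j | x j. 2 \<le> x \<and> k \<le> j \<and> x^j \<le> N})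
           \<le> (real N powr (1/k) + 1) * (log 2 (real N) + 1)"
proof (cases "N = 0")
  case True
  then show ?thesis by (simp add: power_eq_0_iff log_def)
next
  case False
  let ?r = "nat \<lfloor>real N powr (1/k)\<rfloor>" and ?L = "nat \<lfloor>log 2 (real N)\<rfloor>"
  have sub: "{x^j | x j. 2 \<le> x \<and> k \<le> j \<and> x^j \<le> N} \<subseteq> (\<lambda>(x,j). x^j) ` ({..?r} \<times> {..?L})"
  proof clarify
    fix x j assume x: "2 \<le> x" and j: "k \<le> j" and le: "x^j \<le> N"
    have "x^k \<le> N" using power_increasing[OF j, of x] x le by linarith
    then have "real x ^ k \<le> real N" by (metis of_nat_le_iff of_nat_power)
    then have "real x \<le> real N powr (1/k)" using assms by (rule real_le_root_if_power_le[rotated])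
    moreover have "real j \<le> log 2 (real N)" using x le by (rule exponent_le_log2_if_power_le)
    ultimately have "x \<le> ?r" "j \<le> ?L" by (simp_all add: le_nat_floor)
    then show "x^j \<in> (\<lambda>(x,j). x^j) ` ({..?r} \<times> {..?L})" by force
  qed
  have "card {x^j | x j. 2 \<le> x \<and> k \<le> j \<and> x^j \<le> N} \<le> (?r + 1) * (?L + 1)"
    using card_mono[OF _ sub] card_image_le[of "{..?r} \<times> {..?L}" "\<lambda>(x,j). x^j"]
    by (simp add: card_cartesian_product)
  also have "real \<dots> = (real ?r + 1) * (real ?L + 1)" by (simp only: of_nat_mult of_nat_add of_nat_1)
  also have "\<dots> \<le> (real N powr (1/k) + 1) * (log 2 (real N) + 1)"
  proof (intro mult_mono)
    have "0 \<le> real N powr (1/k)" by simp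
    then show "real ?r + 1 \<le> real N powr (1/k) + 1" "0 \<le> real N powr (1/k) + 1" by linarith+
    have "0 \<le> log 2 (real N)" using False by simp
    then show "real ?L + 1 \<le> log 2 (real N) + 1" by linarith
  qed simp
  finally show ?thesis by simp
qed

definition E3star_gaps :: "nat \<Rightarrow> nat set" where
  "E3star_gaps N = {a. 1 \<le> a \<and> a \<le> N \<and> a \<notin> E3star}"

lemma E3star_gaps_subset_powers:
  "E3star_gaps N \<subseteq> {x^j | x j. 2 \<le> x \<and> 4 \<le> j \<and> x^j \<le> N}"
proof
  fix a assume "a \<in> E3star_gaps N"
  then have a: "1 \<le> a" "a \<le> N" "\<not> inE a" by (auto simp: E3star_gaps_def E3star_def)
  then obtain x n where "x > 1" "n > 1" "a = x^(n^2)" using not_inE_imp_pow_square by blast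
  moreover have "4 \<le> n^2" using \<open>n > 1\<close> by (rule four_le_square)
  ultimately have "a = x^(n^2) \<and> 2 \<le> x \<and> 4 \<le> n^2 \<and> x^(n^2) \<le> N" using a(2) by auto
  then show "a \<in> {x^j | x j. 2 \<le> x \<and> 4 \<le> j \<and> x^j \<le> N}" by blast
qed

lemma card_E3star_gaps_upper:
  "real (card (E3star_gaps N)) \<le> (real N powr (1/4) + 1) * (log 2 (real N) + 1)"
proof -
  have "finite {x^j | x j. 2 \<le> x \<and> 4 \<le> j \<and> x^j \<le> N}"
    by (rule finite_subset[of _ "{..N}"]) auto
  then have "card (E3star_gaps N) \<le> card {x^j | x j. 2 \<le> x \<and> 4 \<le> j \<and> x^j \<le> N}"
    using E3star_gaps_subset_powers by (rule card_mono)
  then show ?thesis using card_powers_le[of 4 N] by simp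
qed

lemma card_E3star_gaps_lower:
  "real N powr (1/4) / 4 - 1 \<le> real (card (E3star_gaps N))"
proof -
  define p where "p = real N powr (1/4)"
  define K where "K = nat \<lfloor>p / 4\<rfloor>"
  let ?f = "\<lambda>i::nat. (2 * (2*i + 1))^4"
  have p_nonneg: "0 \<le> p" by (simp add: p_def)
  have p_pow: "p^4 = real N" unfolding p_def by (cases "N = 0") (simp_all add: powr_power)
  have "?f ` {..<K} \<subseteq> E3star_gaps N"
  proof clarify
    fix i assume "i < K"
    then have "real i + 1 \<le> p / 4" unfolding K_def using p_nonneg by linarith
    then have "real (2 * (2*i + 1)) ^ 4 < p ^ 4" by (intro power_strict_mono) auto
    then have "real (?f i) < real N" using p_pow by simp
    then have "?f i \<le> N" by linarith
    moreover have "\<not> inE (?f i)" by (rule not_inE_double_odd_fourth) simp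
    ultimately show "?f i \<in> E3star_gaps N" by (simp add: E3star_gaps_def E3star_def)
  qed
  moreover have "finite (E3star_gaps N)"
    unfolding E3star_gaps_def by (rule finite_subset[of _ "{..N}"]) auto
  ultimately have "card (?f ` {..<K}) \<le> card (E3star_gaps N)" by (intro card_mono)
  moreover have "inj_on ?f {..<K}" by (rule inj_onI) (simp add: power_eq_iff_eq_base)
  ultimately have "real K \<le> real (card (E3star_gaps N))" by (simp add: card_image)
  moreover have "p / 4 - 1 \<le> real K" unfolding K_def using p_nonneg by linarith
  ultimately show ?thesis unfolding p_def by linarith
qed

lemma ln_ratio_sandwich:
  fixes l f u :: "nat \<Rightarrow> real"
  assumes "\<forall>\<^sub>F n in sequentially. 0 < l n \<and> l n \<le> f n \<and> f n \<le> u n"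
    and "(\<lambda>n. ln (l n) / ln (real n)) \<longlonglongrightarrow> c"
    and "(\<lambda>n. ln (u n) / ln (real n)) \<longlonglongrightarrow> c"
  shows "(\<lambda>n. ln (f n) / ln (real n)) \<longlonglongrightarrow> c"
proof (rule tendsto_sandwich[OF _ _ assms(2,3)])
  have "\<forall>\<^sub>F n in sequentially. 0 < l n \<and> l n \<le> f n \<and> f n \<le> u n \<and> 0 < ln (real n)"
    using assms(1) eventually_gt_at_top[of 1] by eventually_elim simp
  then show "\<forall>\<^sub>F n in sequentially. ln (l n) / ln (real n) \<le> ln (f n) / ln (real n)"
    and "\<forall>\<^sub>F n in sequentially. ln (f n) / ln (real n) \<le> ln (u n) / ln (real n)"
    by (eventually_elim, simp add: divide_right_mono)+
qed

theorem mainTheorem5: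
  shows "(\<lambda>n::nat. ln (real (card {a::nat. 1 \<le> a \<and> a \<le> n \<and> a \<notin> E3star})) / ln (real n))
           \<longlonglongrightarrow> 1 / 4"
proof -
  have "\<forall>\<^sub>F N in sequentially. 8 \<le> real N powr (1/4)" by real_asymp
  then have "\<forall>\<^sub>F N in sequentially. 0 < real N powr (1/4) / 8
      \<and> real N powr (1/4) / 8 \<le> real (card (E3star_gaps N))
      \<and> real (card (E3star_gaps N)) \<le> (real N powr (1/4) + 1) * (log 2 (real N) + 1)"
  proof eventually_elim
    case (elim N)
    then show ?case
      using card_E3star_gaps_lower[of N] card_E3star_gaps_upper[of N] by (intro conjI) linarith+
  qed
  then have "(\<lambda>N. ln (real (card (E3star_gaps N))) / ln (real N)) \<longlonglongrightarrow> 1 / 4"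
    by (rule ln_ratio_sandwich) real_asymp+
  then show ?thesis by (simp add: E3star_gaps_def)
qed

end
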